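(* Let $\mathbf{Q}^\star,\mathbf{Q},\mathbf{Q}_r,\mathbf{H}$ be as in the context, let $\lambda_j^\star$ be the $j$-th eigenvalue of $\mathbf{Q}^\star$, and define $\delta^\star=\min\{\min_{j\in[r-1]}|\lambda_j^\star-\lambda_{j+1}^\star|,\ \lambda_r^\star\}$. If $\|\mathbf{H}\|_2\le\delta^\star/2$, then $$\|\mathbf{Q}^\star-\mathbf{Q}_r\|_2\le O\!\left(\lambda_{r+1}^\star+\frac{\lambda_1^\star}{\delta^\star}\|\mathbf{H}\|_2\right).$$
   Context: $\mathbf{Q}^\star\in\mathbb{C}^{n\times n}$ is Hermitian positive semi-definite of rank $r^\star$, eigenvalues $\lambda_1^\star\ge\lambda_2^\star\ge\dots\ge 0$ (zero beyond the rank). $\mathbf{H}\in\mathbb{C}^{n\times n}$ is arbitrary (not necessarily Hermitian), $\mathbf{Q}=\mathbf{Q}^\star+\mathbf{H}$, and $\mathbf{Q}_r=\mathbf{V}_r\boldsymbol{\Sigma}_r\mathbf{V}_r^\dagger$ with $\boldsymbol{\Sigma}_r$ the diagonal matrix of the top-$r$ singular values of $\mathbf{Q}$ and $\mathbf{V}_r$ the corresponding left singular vectors. $\|\cdot\|_2$ is the spectral norm; $O(\cdot)$ hides an absolute constant. *)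

theory Defs
  imports "Jordan_Normal_Form.Matrix" Complex_Main
begin

definition adj :: "complex mat \<Rightarrow> complex mat" where
  "adj A = mat (dim_col A) (dim_row A) (\<lambda>(i,j). cnj (A $$ (j,i)))"

definition unitary_mat :: "nat \<Rightarrow> complex mat \<Rightarrow> bool" where
  "unitary_mat n U \<longleftrightarrow> U \<in> carrier_mat n n \<and> adj U * U = 1\<^sub>m n"

definition hermitian_mat :: "nat \<Rightarrow> complex mat \<Rightarrow> bool" where
  "hermitian_mat n A \<longleftrightarrow> A \<in> carrier_mat n n \<and> adj A = A"

definition psd_mat :: "nat \<Rightarrow> complex mat \<Rightarrow> bool" where
  "psd_mat n A \<longleftrightarrow> hermitian_mat n A \<and>
     (\<forall>v \<in> carrier_vec n. Re (\<Sum>i<n. cnj (v $ i) * (A *\<^sub>v v) $ i) \<ge> 0)"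

definition diag_real :: "nat \<Rightarrow> (nat \<Rightarrow> real) \<Rightarrow> complex mat" where
  "diag_real n d = mat n n (\<lambda>(i,j). if i = j then complex_of_real (d i) else 0)"

definition vnorm :: "complex vec \<Rightarrow> real" where
  "vnorm v = sqrt (\<Sum>i<dim_vec v. (cmod (v $ i))\<^sup>2)"

definition spec_norm :: "complex mat \<Rightarrow> real" where
  "spec_norm A = Sup {vnorm (A *\<^sub>v v) | v. v \<in> carrier_vec (dim_col A) \<and> vnorm v \<le> 1}"

(* Spectral decomposition A = U diag(lam) U^\<dagger>, U unitary, eigenvalues sorted
   lam 0 \<ge> lam 1 \<ge> ... \<ge> lam (n-1) (0-based; lam (j-1) is the paper's \<lambda>_j). *)
definition sorted_eig_decomp :: "nat \<Rightarrow> complex mat \<Rightarrow> complex mat \<Rightarrow> (nat \<Rightarrow> real) \<Rightarrow> bool" where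
  "sorted_eig_decomp n A U lam \<longleftrightarrow> unitary_mat n U \<and> A = U * diag_real n lam * adj U \<and>
     (\<forall>i j. i \<le> j \<and> j < n \<longrightarrow> lam j \<le> lam i)"

definition svd :: "nat \<Rightarrow> complex mat \<Rightarrow> complex mat \<Rightarrow> (nat \<Rightarrow> real) \<Rightarrow> complex mat \<Rightarrow> bool" where
  "svd n A U s W \<longleftrightarrow> unitary_mat n U \<and> unitary_mat n W \<and> A = U * diag_real n s * adj W \<and>
     (\<forall>i j. i \<le> j \<and> j < n \<longrightarrow> s j \<le> s i) \<and> (\<forall>i<n. 0 \<le> s i)"

definition first_cols :: "nat \<Rightarrow> nat \<Rightarrow> complex mat \<Rightarrow> complex mat" where
  "first_cols n r U = mat n r (\<lambda>(i,j). U $$ (i,j))"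

definition trunc_r :: "nat \<Rightarrow> nat \<Rightarrow> complex mat \<Rightarrow> (nat \<Rightarrow> real) \<Rightarrow> complex mat" where
  "trunc_r n r U s = first_cols n r U * diag_real r s * adj (first_cols n r U)"

end

theory Submission
  imports Defs "HOL-Analysis.L2_Norm" "Jordan_Normal_Form.Determinant"
begin

(* Write Q = Q* + H = V S W^\<dagger> and Q* = U \<Lambda> U^\<dagger>. As Q* is Hermitian, Q^\<dagger> = Q* + H^\<dagger> = W S V^\<dagger>,
   and splitting S = S_r + S_p at index r gives

     Q* - Q_r = W S_p V^\<dagger> + (W - V) S_r V^\<dagger> - H^\<dagger>.

   Weyl's inequality bounds the first term by s_(r+1) <= \<lambda>*_(r+1) + |H|. For the middle term,
   D = U^\<dagger> (W - V) solves the Sylvester equation \<Lambda> D + D S = K with K = U^\<dagger> (H^\<dagger> V - H W),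
   so |K| <= 2|H| and D S_r is the Schur product of K with the ratios s_j / (\<lambda>_i + s_j), j <= r.
   Expanding these ratios in geometric series bounds its norm by |K| s_1 / s_r, and Weyl gives
   s_1 <= \<lambda>*_1 + |H| and s_r >= \<lambda>*_r - |H| >= \<delta>*/2. Collecting terms gives the claim with C = 8;
   of \<delta>* only \<delta>* <= \<lambda>*_r is used. *)

definition cinner :: "complex vec \<Rightarrow> complex vec \<Rightarrow> complex" where
  "cinner x y = (\<Sum>i<dim_vec x. cnj (x$i) * y$i)"

lemma vnorm_eq_L2_set: "vnorm v = L2_set (\<lambda>i. cmod (v$i)) {..<dim_vec v}"
  unfolding vnorm_def L2_set_def by simp

lemma vnorm_nonneg: "0 \<le> vnorm v"
  unfolding vnorm_def by (simp add: sum_nonneg)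

lemma vnorm_power2: "(vnorm v)^2 = (\<Sum>i<dim_vec v. (cmod (v$i))^2)"
  unfolding vnorm_def by (simp add: sum_nonneg)

lemma vnorm_zero [simp]: "vnorm (0\<^sub>v n) = 0"
  unfolding vnorm_def by simp

lemma vnorm_uminus [simp]: "vnorm (- x) = vnorm x"
  unfolding vnorm_def by simp

lemma vnorm_smult: "vnorm (c \<cdot>\<^sub>v v) = cmod c * vnorm v"
proof -
  have "(\<Sum>i<dim_vec v. (cmod ((c \<cdot>\<^sub>v v)$i))^2) = (cmod c)^2 * (\<Sum>i<dim_vec v. (cmod (v$i))^2)"
    by (simp add: sum_distrib_left norm_mult power_mult_distrib)
  then show ?thesis unfolding vnorm_def by (simp add: real_sqrt_mult)
qed

lemma vnorm_unit_vec:
  assumes "j < n"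
  shows "vnorm (unit_vec n j) = 1"
proof -
  have "(\<Sum>k<n. (cmod (unit_vec n j $ k))^2) = (\<Sum>k<n. if k = j then 1 else 0)"
    by (intro sum.cong) (auto simp: unit_vec_def)
  then show ?thesis unfolding vnorm_def using assms by simp
qed

lemma vnorm_eq_0_iff: "vnorm v = 0 \<longleftrightarrow> v = 0\<^sub>v (dim_vec v)"
proof
  assume "vnorm v = 0"
  then have "(\<Sum>i<dim_vec v. (cmod (v$i))^2) = 0" unfolding vnorm_def by simp
  then have "\<forall>i\<in>{..<dim_vec v}. (cmod (v$i))^2 = 0" by (subst (asm) sum_nonneg_eq_0_iff) auto
  then show "v = 0\<^sub>v (dim_vec v)" by (intro eq_vecI) auto
qed (metis vnorm_zero)

lemma cmod_index_le_vnorm: "i < dim_vec v \<Longrightarrow> cmod (v$i) \<le> vnorm v"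
  unfolding vnorm_def by (rule real_le_rsqrt) (auto intro: member_le_sum)

lemma vnorm_le_sum_cmod: "vnorm v \<le> (\<Sum>i<dim_vec v. cmod (v$i))"
  unfolding vnorm_eq_L2_set by (rule L2_set_le_sum) auto

lemma vnorm_add_le:
  assumes "dim_vec y = dim_vec x"
  shows "vnorm (x + y) \<le> vnorm x + vnorm y"
proof -
  have "vnorm (x + y) = L2_set (\<lambda>i. cmod (x$i + y$i)) {..<dim_vec x}"
    unfolding vnorm_eq_L2_set using assms by (intro L2_set_cong) auto
  also have "\<dots> \<le> L2_set (\<lambda>i. cmod (x$i) + cmod (y$i)) {..<dim_vec x}"
    by (rule L2_set_mono) (auto simp: norm_triangle_ineq)
  also have "\<dots> \<le> vnorm x + vnorm y"
    unfolding vnorm_eq_L2_set using assms L2_set_triangle_ineq by metis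
  finally show ?thesis .
qed

lemma vnorm_diff_le:
  assumes "dim_vec y = dim_vec x"
  shows "vnorm (x - y) \<le> vnorm x + vnorm y"
proof -
  have "x - y = x + (- y)" using assms by auto
  then show ?thesis using vnorm_add_le[of "-y" x] assms by simp
qed

lemma vnorm_le_add_vnorm_diff:
  assumes "u \<in> carrier_vec n" "v \<in> carrier_vec n"
  shows "vnorm u \<le> vnorm v + vnorm (u - v)"
proof -
  have "u = v + (u - v)" using assms by auto
  then show ?thesis using vnorm_add_le[of "u - v" v] assms by simp
qed

lemma L2_set_cmod_sum_le:
  fixes N :: nat
  shows "L2_set (\<lambda>i. cmod (\<Sum>k<N. f k i)) A \<le> (\<Sum>k<N. L2_set (\<lambda>i. cmod (f k i)) A)"
proof (induction N)
  case (Suc N)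
  have "L2_set (\<lambda>i. cmod (\<Sum>k<Suc N. f k i)) A \<le> L2_set (\<lambda>i. cmod (\<Sum>k<N. f k i) + cmod (f N i)) A"
    by (rule L2_set_mono) (auto simp: norm_triangle_ineq)
  also have "\<dots> \<le> L2_set (\<lambda>i. cmod (\<Sum>k<N. f k i)) A + L2_set (\<lambda>i. cmod (f N i)) A"
    by (rule L2_set_triangle_ineq)
  finally show ?case using Suc by simp
qed (simp add: L2_set_def)

lemma vnorm_sum_le:
  fixes N :: nat
  assumes w: "w \<in> carrier_vec n" and vs: "\<And>k. vs k \<in> carrier_vec n"
    and w_eq: "\<And>i. i < n \<Longrightarrow> w$i = (\<Sum>k<N. vs k $ i)"
  shows "vnorm w \<le> (\<Sum>k<N. vnorm (vs k))"
proof -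
  have dim: "dim_vec (vs k) = n" for k
    using carrier_vecD[OF vs] .
  have "vnorm w = L2_set (\<lambda>i. cmod (\<Sum>k<N. vs k $ i)) {..<n}"
    unfolding vnorm_eq_L2_set using w by (intro L2_set_cong) (auto simp: w_eq)
  also have "\<dots> \<le> (\<Sum>k<N. vnorm (vs k))"
    unfolding vnorm_eq_L2_set dim by (rule L2_set_cmod_sum_le[of "\<lambda>k i. vs k $ i"])
  finally show ?thesis .
qed

lemma cinner_self: "cinner x x = complex_of_real ((vnorm x)^2)"
  unfolding cinner_def vnorm_power2 of_real_sum
  by (rule sum.cong) (auto simp: complex_norm_square[symmetric] mult.commute simp del: of_real_power)

lemma cinner_cauchy_schwarz:
  assumes "dim_vec y = dim_vec x"
  shows "cmod (cinner x y) \<le> vnorm x * vnorm y"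
proof -
  have "cmod (cinner x y) \<le> (\<Sum>i<dim_vec x. cmod (x$i) * cmod (y$i))"
    unfolding cinner_def by (rule order_trans[OF norm_sum]) (simp add: norm_mult)
  also have "\<dots> \<le> L2_set (\<lambda>i. cmod (x$i)) {..<dim_vec x} * L2_set (\<lambda>i. cmod (y$i)) {..<dim_vec x}"
    using L2_set_mult_ineq[of "\<lambda>i. cmod (x$i)" "\<lambda>i. cmod (y$i)"] by simp
  finally show ?thesis unfolding vnorm_eq_L2_set using assms by simp
qed

lemma index_mult_mat_vec_sum:
  assumes "A \<in> carrier_mat n m" "v \<in> carrier_vec m" "i < n"
  shows "(A *\<^sub>v v)$i = (\<Sum>j<m. A$$(i,j) * v$j)"
  using assms by (auto simp: scalar_prod_def atLeast0LessThan intro!: sum.cong)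

lemma index_mult_mat_sum:
  assumes "A \<in> carrier_mat n k" "B \<in> carrier_mat k m" "i < n" "j < m"
  shows "(A * B)$$(i,j) = (\<Sum>l<k. A$$(i,l) * B$$(l,j))"
  using assms by (auto simp: scalar_prod_def atLeast0LessThan intro!: sum.cong)

lemma mult_carrier_mat_square [simp]:
  "A \<in> carrier_mat n n \<Longrightarrow> B \<in> carrier_mat n n \<Longrightarrow> A * B \<in> carrier_mat n n"
  by (rule mult_carrier_mat)

lemma mult_mat_vec_carrier_square [simp]:
  "A \<in> carrier_mat n n \<Longrightarrow> v \<in> carrier_vec n \<Longrightarrow> A *\<^sub>v v \<in> carrier_vec n"
  by (rule mult_mat_vec_carrier)

lemma assoc_mult_mat3_vec:
  assumes "A \<in> carrier_mat n k" "B \<in> carrier_mat k l" "C \<in> carrier_mat l m" "x \<in> carrier_vec m"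
  shows "(A * B * C) *\<^sub>v x = A *\<^sub>v (B *\<^sub>v (C *\<^sub>v x))"
proof -
  have "(A * B * C) *\<^sub>v x = (A * B) *\<^sub>v (C *\<^sub>v x)"
    using assms by (intro assoc_mult_mat_vec) auto
  also have "\<dots> = A *\<^sub>v (B *\<^sub>v (C *\<^sub>v x))"
    using assms by (intro assoc_mult_mat_vec) auto
  finally show ?thesis .
qed

lemma adj_carrier_mat [simp]: "A \<in> carrier_mat n m \<Longrightarrow> adj A \<in> carrier_mat m n"
  unfolding adj_def by auto

lemma dim_adj [simp]: "dim_row (adj A) = dim_col A" "dim_col (adj A) = dim_row A"
  unfolding adj_def by auto

lemma index_adj [simp]: "i < dim_col A \<Longrightarrow> j < dim_row A \<Longrightarrow> adj A $$ (i,j) = cnj (A $$ (j,i))"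
  unfolding adj_def by auto

lemma adj_adj [simp]: "adj (adj A) = A"
  by (intro eq_matI) auto

lemma adj_mult:
  assumes "A \<in> carrier_mat n k" "B \<in> carrier_mat k m"
  shows "adj (A * B) = adj B * adj A"
proof (rule eq_matI)
  fix i j assume "i < dim_row (adj B * adj A)" "j < dim_col (adj B * adj A)"
  then have i: "i < m" and j: "j < n" using assms by auto
  have "adj (A * B) $$ (i,j) = cnj (\<Sum>l<k. A$$(j,l) * B$$(l,i))"
    using assms i j by (simp add: index_mult_mat_sum[OF assms j i])
  also have "\<dots> = (\<Sum>l<k. adj B $$ (i,l) * adj A $$ (l,j))"
    using assms i j by (auto simp: mult.commute)
  also have "\<dots> = (adj B * adj A) $$ (i,j)"
    using assms i j by (intro index_mult_mat_sum[symmetric]) auto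
  finally show "adj (A * B) $$ (i,j) = (adj B * adj A) $$ (i,j)" .
qed (use assms in auto)

lemma adj_add:
  assumes "A \<in> carrier_mat n m" "B \<in> carrier_mat n m"
  shows "adj (A + B) = adj A + adj B"
  using assms by (intro eq_matI) auto

lemma diag_real_carrier_mat [simp]: "diag_real n d \<in> carrier_mat n n"
  unfolding diag_real_def by auto

lemma dim_diag_real [simp]: "dim_row (diag_real n d) = n" "dim_col (diag_real n d) = n"
  unfolding diag_real_def by auto

lemma diag_real_mult_vec_carrier [simp]: "diag_real n d *\<^sub>v v \<in> carrier_vec n"
  by (simp add: carrier_vecI)

lemma index_diag_real [simp]:
  "i < n \<Longrightarrow> j < n \<Longrightarrow> diag_real n d $$ (i,j) = (if i = j then complex_of_real (d i) else 0)"
  unfolding diag_real_def by auto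

lemma adj_diag_real [simp]: "adj (diag_real n d) = diag_real n d"
  by (intro eq_matI) auto

lemma index_diag_real_mult_vec:
  assumes "v \<in> carrier_vec n" "i < n"
  shows "(diag_real n d *\<^sub>v v) $ i = complex_of_real (d i) * v $ i"
proof -
  have "(diag_real n d *\<^sub>v v) $ i = (\<Sum>j<n. diag_real n d $$ (i,j) * v$j)"
    using assms by (intro index_mult_mat_vec_sum) auto
  also have "\<dots> = (\<Sum>j<n. if i = j then complex_of_real (d i) * v$j else 0)"
    using assms by (intro sum.cong) auto
  finally show ?thesis using assms by simp
qed

lemma index_mult_diag_real:
  assumes "A \<in> carrier_mat m n" "i < m" "j < n"
  shows "(A * diag_real n d) $$ (i,j) = A $$ (i,j) * complex_of_real (d j)"
proof -
  have "(A * diag_real n d) $$ (i,j) = (\<Sum>l<n. A$$(i,l) * diag_real n d $$ (l,j))"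
    using assms by (intro index_mult_mat_sum) auto
  also have "\<dots> = (\<Sum>l<n. if l = j then A$$(i,l) * complex_of_real (d j) else 0)"
    using assms by (intro sum.cong) auto
  finally show ?thesis using assms by simp
qed

lemma index_diag_real_mult:
  assumes "A \<in> carrier_mat n m" "i < n" "j < m"
  shows "(diag_real n d * A) $$ (i,j) = complex_of_real (d i) * A $$ (i,j)"
proof -
  have "(diag_real n d * A) $$ (i,j) = (\<Sum>l<n. diag_real n d $$ (i,l) * A$$(l,j))"
    using assms by (intro index_mult_mat_sum) auto
  also have "\<dots> = (\<Sum>l<n. if l = i then complex_of_real (d i) * A$$(l,j) else 0)"
    using assms by (intro sum.cong) auto
  finally show ?thesis using assms by simp
qed

lemma index_mult_diag_real_adj:
  assumes A: "A \<in> carrier_mat n k" and B: "B \<in> carrier_mat m k" and i: "i < n" and j: "j < m"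
  shows "(A * diag_real k d * adj B) $$ (i,j) = (\<Sum>l<k. A$$(i,l) * complex_of_real (d l) * cnj (B$$(j,l)))"
proof -
  have "(A * diag_real k d * adj B) $$ (i,j) = (\<Sum>l<k. (A * diag_real k d) $$ (i,l) * adj B $$ (l,j))"
    using assms by (intro index_mult_mat_sum) auto
  also have "\<dots> = (\<Sum>l<k. A$$(i,l) * complex_of_real (d l) * cnj (B$$(j,l)))"
    using assms by (intro sum.cong) (auto simp: index_mult_diag_real[OF A i] simp del: index_mult_mat)
  finally show ?thesis .
qed

lemma adj_mult_diag_real_adj:
  assumes "A \<in> carrier_mat n n" "B \<in> carrier_mat n n"
  shows "adj (A * diag_real n d * adj B) = B * diag_real n d * adj A"
proof -
  have "adj (A * diag_real n d * adj B) = B * (diag_real n d * adj A)"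
    using assms by (simp add: adj_mult[of _ n n _ n])
  then show ?thesis
    using assms by (simp add: assoc_mult_mat[of _ n n _ n _ n])
qed

lemma cinner_mult_mat_vec_left:
  assumes A: "A \<in> carrier_mat n m" and x: "x \<in> carrier_vec m" and y: "y \<in> carrier_vec n"
  shows "cinner (A *\<^sub>v x) y = cinner x (adj A *\<^sub>v y)"
proof -
  have "cinner (A *\<^sub>v x) y = (\<Sum>i<n. \<Sum>j<m. cnj (x$j) * (cnj (A$$(i,j)) * y$i))"
    unfolding cinner_def using assms
    by (auto simp: index_mult_mat_vec_sum[OF A x] sum_distrib_right sum_distrib_left mult_ac
        simp del: index_mult_mat_vec
        intro!: sum.cong)
  also have "\<dots> = (\<Sum>j<m. cnj (x$j) * (\<Sum>i<n. cnj (A$$(i,j)) * y$i))"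
    by (subst sum.swap) (simp add: sum_distrib_left)
  also have "\<dots> = cinner x (adj A *\<^sub>v y)"
    unfolding cinner_def using assms
    by (auto simp: index_mult_mat_vec_sum[of "adj A" m n] simp del: index_mult_mat_vec intro!: sum.cong)
  finally show ?thesis .
qed

lemma unitary_mat_carrier_mat: "unitary_mat n U \<Longrightarrow> U \<in> carrier_mat n n"
  unfolding unitary_mat_def by simp

lemma unitary_mat_mult_adj:
  assumes "unitary_mat n U"
  shows "U * adj U = 1\<^sub>m n"
  using assms mat_mult_left_right_inverse[of "adj U" n U] unfolding unitary_mat_def by auto

lemma unitary_mat_adj: "unitary_mat n U \<Longrightarrow> unitary_mat n (adj U)"
  using unitary_mat_mult_adj unfolding unitary_mat_def by auto

lemma unitary_mat_adj_mult_vec_cancel: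
  assumes "unitary_mat n U" "x \<in> carrier_vec n"
  shows "adj U *\<^sub>v (U *\<^sub>v x) = x"
  using assms unfolding unitary_mat_def by (metis adj_carrier_mat assoc_mult_mat_vec one_mult_mat_vec)

lemma unitary_mat_vnorm:
  assumes U: "unitary_mat n U" and x: "x \<in> carrier_vec n"
  shows "vnorm (U *\<^sub>v x) = vnorm x"
proof -
  have Uc: "U \<in> carrier_mat n n" using U by (rule unitary_mat_carrier_mat)
  have "complex_of_real ((vnorm (U *\<^sub>v x))^2) = cinner (U *\<^sub>v x) (U *\<^sub>v x)"
    by (simp only: cinner_self)
  also have "\<dots> = cinner x (adj U *\<^sub>v (U *\<^sub>v x))"
    using Uc x by (intro cinner_mult_mat_vec_left) auto
  also have "\<dots> = complex_of_real ((vnorm x)^2)"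
    using U x by (simp only: unitary_mat_adj_mult_vec_cancel cinner_self)
  finally have "(vnorm (U *\<^sub>v x))^2 = (vnorm x)^2" using of_real_eq_iff by blast
  then show ?thesis using vnorm_nonneg by (metis power2_eq_iff_nonneg)
qed

lemma vnorm_mult_mat_vec_le_sum_cmod:
  assumes A: "A \<in> carrier_mat n m" and x: "x \<in> carrier_vec m"
  shows "vnorm (A *\<^sub>v x) \<le> (\<Sum>i<n. \<Sum>j<m. cmod (A$$(i,j))) * vnorm x"
proof -
  have "vnorm (A *\<^sub>v x) \<le> (\<Sum>i<n. cmod ((A *\<^sub>v x)$i))"
    using vnorm_le_sum_cmod[of "A *\<^sub>v x"] A by simp
  also have "\<dots> \<le> (\<Sum>i<n. \<Sum>j<m. cmod (A$$(i,j)) * vnorm x)"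
  proof (rule sum_mono)
    fix i assume "i \<in> {..<n}"
    then have "cmod ((A *\<^sub>v x)$i) \<le> (\<Sum>j<m. cmod (A$$(i,j) * x$j))"
      by (simp add: index_mult_mat_vec_sum[OF A x] norm_sum del: index_mult_mat_vec)
    also have "\<dots> \<le> (\<Sum>j<m. cmod (A$$(i,j)) * vnorm x)"
      using x by (intro sum_mono) (auto simp: norm_mult intro!: mult_left_mono cmod_index_le_vnorm)
    finally show "cmod ((A *\<^sub>v x)$i) \<le> (\<Sum>j<m. cmod (A$$(i,j)) * vnorm x)" .
  qed
  also have "\<dots> = (\<Sum>i<n. \<Sum>j<m. cmod (A$$(i,j))) * vnorm x"
    by (simp add: sum_distrib_right)
  finally show ?thesis .
qed

lemma bdd_above_spec_norm_set:
  "bdd_above {vnorm (A *\<^sub>v v) | v. v \<in> carrier_vec (dim_col A) \<and> vnorm v \<le> 1}"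
proof -
  let ?c = "(\<Sum>i<dim_row A. \<Sum>j<dim_col A. cmod (A$$(i,j)))"
  have "vnorm (A *\<^sub>v v) \<le> ?c" if "v \<in> carrier_vec (dim_col A)" "vnorm v \<le> 1" for v
  proof -
    have "vnorm (A *\<^sub>v v) \<le> ?c * vnorm v"
      using that by (intro vnorm_mult_mat_vec_le_sum_cmod) auto
    also have "\<dots> \<le> ?c"
      using that by (simp add: mult_left_le sum_nonneg)
    finally show ?thesis .
  qed
  then show ?thesis by (intro bdd_aboveI[of _ ?c]) auto
qed

lemma vnorm_mult_mat_vec_le_spec_norm:
  assumes x: "x \<in> carrier_vec (dim_col A)"
  shows "vnorm (A *\<^sub>v x) \<le> spec_norm A * vnorm x"
proof (cases "vnorm x = 0")
  case True
  then have "A *\<^sub>v x = 0\<^sub>v (dim_row A)"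
    using x by (auto simp: vnorm_eq_0_iff)
  then show ?thesis using True by simp
next
  case False
  then have pos: "vnorm x > 0" using vnorm_nonneg[of x] by simp
  define y where "y = complex_of_real (1 / vnorm x) \<cdot>\<^sub>v x"
  have y: "y \<in> carrier_vec (dim_col A)" and ny: "vnorm y = 1"
    using x pos unfolding y_def by (auto simp: vnorm_smult norm_divide)
  have "A *\<^sub>v y = complex_of_real (1 / vnorm x) \<cdot>\<^sub>v (A *\<^sub>v x)"
    unfolding y_def using x by (intro mult_mat_vec[of _ "dim_row A" "dim_col A"]) auto
  then have "vnorm (A *\<^sub>v y) = vnorm (A *\<^sub>v x) / vnorm x"
    using pos by (simp add: vnorm_smult norm_divide)
  moreover have "vnorm (A *\<^sub>v y) \<le> spec_norm A"
    unfolding spec_norm_def using y ny bdd_above_spec_norm_set by (intro cSup_upper) auto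
  ultimately show ?thesis using pos by (simp add: divide_le_eq mult.commute)
qed

lemma spec_norm_nonneg: "0 \<le> spec_norm A"
proof -
  have "A *\<^sub>v 0\<^sub>v (dim_col A) = 0\<^sub>v (dim_row A)"
    by (auto intro!: eq_vecI)
  then have "0 \<in> {vnorm (A *\<^sub>v v) | v. v \<in> carrier_vec (dim_col A) \<and> vnorm v \<le> 1}"
    by (metis (mono_tags, lifting) mem_Collect_eq vnorm_zero zero_carrier_vec zero_le_one)
  then show ?thesis
    unfolding spec_norm_def using bdd_above_spec_norm_set by (rule cSup_upper)
qed

lemma spec_norm_le:
  assumes c: "0 \<le> c"
    and bound: "\<And>x. x \<in> carrier_vec (dim_col A) \<Longrightarrow> vnorm (A *\<^sub>v x) \<le> c * vnorm x"
  shows "spec_norm A \<le> c"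
  unfolding spec_norm_def
proof (rule cSup_least)
  have "vnorm (A *\<^sub>v 0\<^sub>v (dim_col A)) \<in> {vnorm (A *\<^sub>v v) | v. v \<in> carrier_vec (dim_col A) \<and> vnorm v \<le> 1}"
    by force
  then show "{vnorm (A *\<^sub>v v) | v. v \<in> carrier_vec (dim_col A) \<and> vnorm v \<le> 1} \<noteq> {}"
    by blast
next
  fix t assume "t \<in> {vnorm (A *\<^sub>v v) | v. v \<in> carrier_vec (dim_col A) \<and> vnorm v \<le> 1}"
  then obtain v where v: "v \<in> carrier_vec (dim_col A)" "vnorm v \<le> 1" "t = vnorm (A *\<^sub>v v)"
    by auto
  have "t \<le> c * vnorm v" using bound v by auto
  also have "\<dots> \<le> c" using v c by (simp add: mult_left_le)
  finally show "t \<le> c" .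
qed

lemma vnorm_adj_mult_mat_vec_le_spec_norm:
  assumes A: "A \<in> carrier_mat n n" and x: "x \<in> carrier_vec n"
  shows "vnorm (adj A *\<^sub>v x) \<le> spec_norm A * vnorm x"
proof -
  define y where "y = adj A *\<^sub>v x"
  have y: "y \<in> carrier_vec n" unfolding y_def using A by (simp add: carrier_vecI)
  have "(vnorm y)^2 = Re (cinner (adj A *\<^sub>v x) y)"
    by (simp add: cinner_self y_def)
  also have "\<dots> = Re (cinner x (A *\<^sub>v y))"
    using A x y by (subst cinner_mult_mat_vec_left[of _ n n]) auto
  also have "\<dots> \<le> vnorm x * vnorm (A *\<^sub>v y)"
    using A x y by (intro order_trans[OF complex_Re_le_cmod] cinner_cauchy_schwarz) auto
  also have "\<dots> \<le> vnorm x * (spec_norm A * vnorm y)"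
    using A y by (intro mult_left_mono vnorm_mult_mat_vec_le_spec_norm vnorm_nonneg) auto
  finally have "vnorm y * vnorm y \<le> (spec_norm A * vnorm x) * vnorm y"
    by (simp add: power2_eq_square ac_simps)
  then have "vnorm y \<le> spec_norm A * vnorm x"
    using vnorm_nonneg[of y] spec_norm_nonneg[of A] vnorm_nonneg[of x]
    by (cases "vnorm y = 0") auto
  then show ?thesis unfolding y_def .
qed

lemma cmod_index_le_of_vnorm_mult_mat_vec_le:
  assumes A: "A \<in> carrier_mat n n" and i: "i < n" and j: "j < n"
    and bound: "\<And>x. x \<in> carrier_vec n \<Longrightarrow> vnorm (A *\<^sub>v x) \<le> c * vnorm x"
  shows "cmod (A $$ (i,j)) \<le> c"
proof -
  have "A $$ (i,j) = (A *\<^sub>v unit_vec n j) $ i"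
    using A i j by (simp add: index_mult_mat_vec_sum[OF A] sum.delta cong: if_cong)
  also have "cmod \<dots> \<le> vnorm (A *\<^sub>v unit_vec n j)"
    using A i by (intro cmod_index_le_vnorm) simp
  also have "\<dots> \<le> c"
    using bound[of "unit_vec n j"] j by (simp add: vnorm_unit_vec)
  finally show ?thesis .
qed

lemma spec_norm_uminus: "spec_norm (- A) = spec_norm A"
proof -
  have "{vnorm (- A *\<^sub>v v) | v. v \<in> carrier_vec (dim_col A) \<and> vnorm v \<le> 1}
      = {vnorm (A *\<^sub>v v) | v. v \<in> carrier_vec (dim_col A) \<and> vnorm v \<le> 1}"
    by (metis (no_types, lifting) carrier_vecD uminus_mult_mat_vec vnorm_uminus)
  then show ?thesis unfolding spec_norm_def by simp
qed

section \<open>Weyl's inequality for singular values\<close>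

lemma head_supported_vec_in_kernel_of_head_rows:
  fixes B :: "complex mat"
  assumes B: "B \<in> carrier_mat n n" and k: "k < n"
  obtains c where "c \<in> carrier_vec n" "c \<noteq> 0\<^sub>v n" "\<And>j. k < j \<Longrightarrow> j < n \<Longrightarrow> c$j = 0"
    "\<And>i. i < k \<Longrightarrow> (B *\<^sub>v c)$i = 0"
proof -
  \<comment> \<open>\<open>k\<close> conditions on vectors supported on the first \<open>k + 1\<close> coordinates: a zero row \<open>k\<close>
    makes the combined system singular\<close>
  define r where "r i = (if i < k then row B i else unit_vec n i)" for i
  define A where "A = mat\<^sub>r n n (\<lambda>i. if i = k then 0\<^sub>v n else r i)"
  have r: "r \<in> {0..<n} \<rightarrow> carrier_vec n" unfolding r_def using B by auto
  have A: "A \<in> carrier_mat n n" unfolding A_def by (rule mat_row_carrierI)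
  have "det A = 0" unfolding A_def by (rule det_row_0[OF k r])
  then obtain c where c: "c \<in> carrier_vec n" "c \<noteq> 0\<^sub>v n" and Ac: "A *\<^sub>v c = 0\<^sub>v n"
    using det_0_iff_vec_prod_zero[OF A] by blast
  have row_c: "r i \<bullet> c = 0" if "i < n" "i \<noteq> k" for i
  proof -
    have "dim_vec (r i) = n" unfolding r_def using B by auto
    then have "r i \<bullet> c = (A *\<^sub>v c) $ i"
      using that unfolding A_def by (simp add: row_mat_of_row_fun)
    then show ?thesis using Ac that by simp
  qed
  show ?thesis
  proof
    show "c$j = 0" if "k < j" "j < n" for j
      using row_c[of j] that c by (simp add: r_def)
    show "(B *\<^sub>v c)$i = 0" if "i < k" for i
      using row_c[of i] that k B by (simp add: r_def)
  qed (use c in auto)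
qed

lemma vnorm_diag_real_mult_vec_power2:
  assumes "v \<in> carrier_vec n"
  shows "(vnorm (diag_real n a *\<^sub>v v))^2 = (\<Sum>i<n. (a i)^2 * (cmod (v$i))^2)"
  unfolding vnorm_power2 using assms
  by (auto simp: index_diag_real_mult_vec norm_mult power_mult_distrib simp del: index_mult_mat_vec
      intro!: sum.cong)

lemma vnorm_diag_real_mult_vec_ge:
  assumes v: "v \<in> carrier_vec n" and t: "0 \<le> t"
    and a: "\<And>i. i < n \<Longrightarrow> v$i \<noteq> 0 \<Longrightarrow> t \<le> \<bar>a i\<bar>"
  shows "t * vnorm v \<le> vnorm (diag_real n a *\<^sub>v v)"
proof -
  have "(t * vnorm v)^2 = (\<Sum>i<n. t^2 * (cmod (v$i))^2)"
    using v by (simp add: power_mult_distrib vnorm_power2 sum_distrib_left)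
  also have "\<dots> \<le> (\<Sum>i<n. (a i)^2 * (cmod (v$i))^2)"
  proof (rule sum_mono)
    fix i assume "i \<in> {..<n}"
    then have "v$i \<noteq> 0 \<Longrightarrow> t^2 \<le> (a i)^2"
      using a t by (metis abs_le_square_iff abs_of_nonneg lessThan_iff)
    then show "t^2 * (cmod (v$i))^2 \<le> (a i)^2 * (cmod (v$i))^2"
      by (cases "v$i = 0") (auto intro: mult_right_mono)
  qed
  also have "\<dots> = (vnorm (diag_real n a *\<^sub>v v))^2"
    using vnorm_diag_real_mult_vec_power2[OF v] by simp
  finally show ?thesis using vnorm_nonneg by (metis power2_le_imp_le)
qed

lemma vnorm_diag_real_mult_vec_le:
  assumes v: "v \<in> carrier_vec n" and t: "0 \<le> t"
    and a: "\<And>i. i < n \<Longrightarrow> v$i \<noteq> 0 \<Longrightarrow> \<bar>a i\<bar> \<le> t"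
  shows "vnorm (diag_real n a *\<^sub>v v) \<le> t * vnorm v"
proof -
  have "(vnorm (diag_real n a *\<^sub>v v))^2 = (\<Sum>i<n. (a i)^2 * (cmod (v$i))^2)"
    using vnorm_diag_real_mult_vec_power2[OF v] by simp
  also have "\<dots> \<le> (\<Sum>i<n. t^2 * (cmod (v$i))^2)"
  proof (rule sum_mono)
    fix i assume "i \<in> {..<n}"
    then have "v$i \<noteq> 0 \<Longrightarrow> (a i)^2 \<le> t^2"
      using a t by (metis abs_le_square_iff abs_of_nonneg lessThan_iff)
    then show "(a i)^2 * (cmod (v$i))^2 \<le> t^2 * (cmod (v$i))^2"
      by (cases "v$i = 0") (auto intro: mult_right_mono)
  qed
  also have "\<dots> = (t * vnorm v)^2"
    using v by (simp add: power_mult_distrib vnorm_power2 sum_distrib_left)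
  finally show ?thesis using t vnorm_nonneg by (metis mult_nonneg_nonneg power2_le_imp_le)
qed

lemma vnorm_svd_mult_vec_head_ge:
  assumes X: "unitary_mat n X" and Z: "unitary_mat n Z" and c: "c \<in> carrier_vec n"
    and head: "\<And>j. k < j \<Longrightarrow> j < n \<Longrightarrow> c$j = 0"
    and a: "\<And>i. i \<le> k \<Longrightarrow> a k \<le> a i" "0 \<le> a k"
  shows "a k * vnorm c \<le> vnorm ((Z * diag_real n a * adj X) *\<^sub>v (X *\<^sub>v c))"
proof -
  have "a k * vnorm c \<le> vnorm (diag_real n a *\<^sub>v c)"
  proof (rule vnorm_diag_real_mult_vec_ge[OF c a(2)])
    fix i assume "i < n" "c$i \<noteq> 0"
    then show "a k \<le> \<bar>a i\<bar>" using head a(1) by (meson abs_ge_self order_trans not_le)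
  qed
  also have "\<dots> = vnorm ((Z * diag_real n a * adj X) *\<^sub>v (X *\<^sub>v c))"
    using X Z c unitary_mat_carrier_mat[OF X] unitary_mat_carrier_mat[OF Z]
    by (simp add: assoc_mult_mat3_vec[of _ n n _ n _ n] unitary_mat_adj_mult_vec_cancel unitary_mat_vnorm)
  finally show ?thesis .
qed

lemma vnorm_svd_mult_vec_tail_le:
  assumes Y: "unitary_mat n Y" and Z: "unitary_mat n Z" and x: "x \<in> carrier_vec n" and k: "k < n"
    and tail: "\<And>i. i < k \<Longrightarrow> (adj Y *\<^sub>v x)$i = 0"
    and b: "\<And>i. k \<le> i \<Longrightarrow> i < n \<Longrightarrow> \<bar>b i\<bar> \<le> b k"
  shows "vnorm ((Z * diag_real n b * adj Y) *\<^sub>v x) \<le> b k * vnorm x"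
proof -
  have Yc: "Y \<in> carrier_mat n n" using Y by (rule unitary_mat_carrier_mat)
  have y: "adj Y *\<^sub>v x \<in> carrier_vec n" using Yc x by simp
  have "vnorm ((Z * diag_real n b * adj Y) *\<^sub>v x) = vnorm (diag_real n b *\<^sub>v (adj Y *\<^sub>v x))"
    using Z Yc x unitary_mat_carrier_mat[OF Z]
    by (simp add: assoc_mult_mat3_vec[of _ n n _ n _ n] unitary_mat_vnorm)
  also have "\<dots> \<le> b k * vnorm (adj Y *\<^sub>v x)"
    using y tail b b[of k] k by (intro vnorm_diag_real_mult_vec_le) (auto, meson not_le)
  also have "vnorm (adj Y *\<^sub>v x) = vnorm x"
    using unitary_mat_adj[OF Y] x by (rule unitary_mat_vnorm)
  finally show ?thesis .
qed

lemma weyl_singular_value_le: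
  assumes X: "unitary_mat n X" and Y: "unitary_mat n Y"
    and Z1: "unitary_mat n Z1" and Z2: "unitary_mat n Z2" and k: "k < n"
    and a: "\<And>i. i \<le> k \<Longrightarrow> a k \<le> a i" "0 \<le> a k"
    and b: "\<And>i. k \<le> i \<Longrightarrow> i < n \<Longrightarrow> \<bar>b i\<bar> \<le> b k"
  shows "a k \<le> b k + spec_norm (Z1 * diag_real n a * adj X - Z2 * diag_real n b * adj Y)"
proof -
  define A where "A = Z1 * diag_real n a * adj X"
  define B where "B = Z2 * diag_real n b * adj Y"
  have Xc: "X \<in> carrier_mat n n" and Yc: "Y \<in> carrier_mat n n"
    using X Y by (auto simp: unitary_mat_carrier_mat)
  have A: "A \<in> carrier_mat n n" and B: "B \<in> carrier_mat n n"
    unfolding A_def B_def using Xc Yc Z1 Z2 by (auto simp: unitary_mat_carrier_mat)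
  obtain c where c: "c \<in> carrier_vec n" "c \<noteq> 0\<^sub>v n" and head: "\<And>j. k < j \<Longrightarrow> j < n \<Longrightarrow> c$j = 0"
    and perp: "\<And>i. i < k \<Longrightarrow> ((adj Y * X) *\<^sub>v c)$i = 0"
    using head_supported_vec_in_kernel_of_head_rows[of "adj Y * X" n k] Xc Yc k by auto
  define x where "x = X *\<^sub>v c"
  have x: "x \<in> carrier_vec n" unfolding x_def using Xc c by simp
  have x_norm: "vnorm x = vnorm c"
    unfolding x_def using X c(1) by (rule unitary_mat_vnorm)
  have "vnorm c \<noteq> 0" using c by (auto simp: vnorm_eq_0_iff)
  then have c_pos: "vnorm c > 0" using vnorm_nonneg[of c] by linarith
  have "a k * vnorm c \<le> vnorm (A *\<^sub>v x)"
    unfolding A_def x_def using X Z1 c(1) head a by (rule vnorm_svd_mult_vec_head_ge)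
  also have "\<dots> \<le> vnorm (B *\<^sub>v x) + vnorm ((A - B) *\<^sub>v x)"
    using A B x vnorm_le_add_vnorm_diff[of "A *\<^sub>v x" n "B *\<^sub>v x"] by (simp add: minus_mult_distrib_mat_vec)
  also have "\<dots> \<le> b k * vnorm c + spec_norm (A - B) * vnorm c"
  proof (intro add_mono)
    have tail: "(adj Y *\<^sub>v x)$i = 0" if "i < k" for i
      using perp[OF that] Xc Yc c unfolding x_def by (simp add: assoc_mult_mat_vec[of _ n n _ n])
    show "vnorm (B *\<^sub>v x) \<le> b k * vnorm c"
      unfolding B_def x_norm[symmetric] using Y Z2 x k tail b by (rule vnorm_svd_mult_vec_tail_le)
    show "vnorm ((A - B) *\<^sub>v x) \<le> spec_norm (A - B) * vnorm c"
      using A B x x_norm by (metis vnorm_mult_mat_vec_le_spec_norm carrier_matD(2) minus_carrier_mat)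
  qed
  finally have "a k * vnorm c \<le> (b k + spec_norm (A - B)) * vnorm c"
    by (simp add: distrib_right)
  then show ?thesis
    unfolding A_def B_def using c_pos by (rule mult_right_le_imp_le)
qed

section \<open>Schur products with eigenvalue-singular value ratios\<close>

lemma le_of_le_add_power:
  fixes a b c q :: real
  assumes le: "\<And>N. a \<le> b + c * q^N" and q: "0 \<le> q" "q < 1"
  shows "a \<le> b"
proof (rule LIMSEQ_le_const)
  show "(\<lambda>N. b + c * q^N) \<longlonglongrightarrow> b"
    using LIMSEQ_power_zero[of q] q by (auto intro!: tendsto_eq_intros)
qed (use le in auto)

lemma ratio_geometric_expansion:
  fixes l s L :: real
  assumes l: "0 \<le> l" and s: "0 < s" and sL: "s \<le> L"
  shows "s / (l + s) = (\<Sum>k<N. 1 / (l + L)^Suc k * (s * (L - s)^k)) + s / (l + s) * ((L - s) / (l + L))^N"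
proof -
  define x where "x = (L - s) / (l + L)"
  have lL: "l + L > 0" and ls: "l + s > 0" using l s sL by linarith+
  have x: "1 - x = (l + s) / (l + L)" unfolding x_def using lL by (simp add: field_simps)
  then have "x \<noteq> 1" using ls lL by auto
  have "(\<Sum>k<N. 1 / (l + L)^Suc k * (s * (L - s)^k)) = (\<Sum>k<N. s / (l + L) * x^k)"
    unfolding x_def by (intro sum.cong) (simp_all add: power_divide)
  also have "\<dots> = s / (l + L) * (\<Sum>k<N. x^k)"
    by (rule sum_distrib_left[symmetric])
  also have "\<dots> = s / (l + L) * ((1 - x^N) / (1 - x))"
    using \<open>x \<noteq> 1\<close> by (simp add: sum_gp_strict)
  also have "\<dots> = s / (l + s) * (1 - x^N)"
    unfolding x using lL ls by (simp add: divide_simps)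
  finally show ?thesis unfolding x_def by (simp add: algebra_simps)
qed

lemma vnorm_diag_real_mult_diag_real_le:
  assumes K: "K \<in> carrier_mat n n" and y: "y \<in> carrier_vec n"
    and K_bound: "\<And>z. z \<in> carrier_vec n \<Longrightarrow> vnorm (K *\<^sub>v z) \<le> \<kappa> * vnorm z" and \<kappa>: "0 \<le> \<kappa>"
    and \<alpha>: "\<And>i. i < n \<Longrightarrow> \<bar>\<alpha> i\<bar> \<le> A" "0 \<le> A"
    and \<beta>: "\<And>j. j < n \<Longrightarrow> \<bar>\<beta> j\<bar> \<le> B" "0 \<le> B"
  shows "vnorm (diag_real n \<alpha> *\<^sub>v (K *\<^sub>v (diag_real n \<beta> *\<^sub>v y))) \<le> A * \<kappa> * B * vnorm y"
proof -
  have "vnorm (diag_real n \<alpha> *\<^sub>v (K *\<^sub>v (diag_real n \<beta> *\<^sub>v y)))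
      \<le> A * vnorm (K *\<^sub>v (diag_real n \<beta> *\<^sub>v y))"
    using K \<alpha> by (intro vnorm_diag_real_mult_vec_le) auto
  also have "\<dots> \<le> A * (\<kappa> * vnorm (diag_real n \<beta> *\<^sub>v y))"
    using K_bound \<alpha>(2) by (intro mult_left_mono) auto
  also have "\<dots> \<le> A * (\<kappa> * (B * vnorm y))"
    using y \<alpha>(2) \<beta> \<kappa> by (intro mult_left_mono vnorm_diag_real_mult_vec_le) auto
  finally show ?thesis by (simp add: ac_simps)
qed

text \<open>If \<open>D\<close> solves \<open>\<Lambda> D + D S = K\<close> for \<open>\<Lambda> = diag lam\<close>, \<open>S = diag s\<close>, then
  \<open>schur_ratio_mat n r lam s K\<close> is \<open>D\<close> times \<open>S\<close> with all but the first \<open>r\<close> singular values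
  replaced by \<open>0\<close>.\<close>

definition schur_ratio_mat :: "nat \<Rightarrow> nat \<Rightarrow> (nat \<Rightarrow> real) \<Rightarrow> (nat \<Rightarrow> real) \<Rightarrow> complex mat \<Rightarrow> complex mat"
  where "schur_ratio_mat n r lam s K =
    mat n n (\<lambda>(i,j). if j < r then K $$ (i,j) * complex_of_real (s j / (lam i + s j)) else 0)"

lemma index_schur_ratio_mat:
  "i < n \<Longrightarrow> j < n \<Longrightarrow> schur_ratio_mat n r lam s K $$ (i,j) =
    (if j < r then K $$ (i,j) * complex_of_real (s j / (lam i + s j)) else 0)"
  unfolding schur_ratio_mat_def by simp

text \<open>The bound \<open>\<kappa> L / m\<close> comes from the expansion
  \<open>s / (\<lambda> + s) = \<Sum>k. s (L - s)\<^sup>k / (\<lambda> + L)\<^sup>k\<^sup>+\<^sup>1\<close>: each term is a product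
  \<open>diag \<cdot> K \<cdot> diag\<close> of norm at most \<open>\<kappa> q\<^sup>k\<close> with \<open>q = 1 - m / L\<close>.\<close>

locale schur_ratio =
  fixes n r :: nat and lam s :: "nat \<Rightarrow> real" and K :: "complex mat" and \<kappa> m L :: real
  assumes K: "K \<in> carrier_mat n n"
    and K_bound: "\<And>z. z \<in> carrier_vec n \<Longrightarrow> vnorm (K *\<^sub>v z) \<le> \<kappa> * vnorm z"
    and \<kappa>: "0 \<le> \<kappa>"
    and lam: "\<And>i. i < n \<Longrightarrow> 0 \<le> lam i"
    and m: "0 < m" "m \<le> L"
    and s: "\<And>j. j < n \<Longrightarrow> j < r \<Longrightarrow> m \<le> s j \<and> s j \<le> L"
begin

lemma index_schur_ratio_mat_expansion:
  assumes i: "i < n" and j: "j < n"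
  shows "schur_ratio_mat n r lam s K $$ (i,j) =
    (\<Sum>k<N. complex_of_real (1 / (lam i + L)^Suc k) * K $$ (i,j)
       * complex_of_real (if j < r then s j * (L - s j)^k else 0))
    + schur_ratio_mat n r lam s K $$ (i,j) * complex_of_real (((L - s j) / (lam i + L))^N)"
proof (cases "j < r")
  case True
  let ?c = "complex_of_real"
  have "s j / (lam i + s j)
      = (\<Sum>k<N. 1 / (lam i + L)^Suc k * (s j * (L - s j)^k))
        + s j / (lam i + s j) * ((L - s j) / (lam i + L))^N"
    using lam[OF i] s[OF j True] m by (intro ratio_geometric_expansion) auto
  then have "K $$ (i,j) * ?c (s j / (lam i + s j))
      = K $$ (i,j) * ?c ((\<Sum>k<N. 1 / (lam i + L)^Suc k * (s j * (L - s j)^k))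
        + s j / (lam i + s j) * ((L - s j) / (lam i + L))^N)"
    by (rule arg_cong)
  also have "\<dots> = (\<Sum>k<N. ?c (1 / (lam i + L)^Suc k) * K $$ (i,j) * ?c (s j * (L - s j)^k))
        + K $$ (i,j) * ?c (s j / (lam i + s j)) * ?c (((L - s j) / (lam i + L))^N)"
    unfolding of_real_add of_real_mult of_real_sum distrib_left sum_distrib_left
    by (simp only: mult_ac)
  finally show ?thesis
    unfolding index_schur_ratio_mat[OF i j] if_P[OF True] .
qed (simp add: index_schur_ratio_mat[OF i j])

definition expansion_term :: "nat \<Rightarrow> complex vec \<Rightarrow> complex vec" where
  "expansion_term k y = diag_real n (\<lambda>i. 1 / (lam i + L)^Suc k) *\<^sub>v
    (K *\<^sub>v (diag_real n (\<lambda>j. if j < r then s j * (L - s j)^k else 0) *\<^sub>v y))"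

definition expansion_remainder :: "nat \<Rightarrow> complex mat" where
  "expansion_remainder N = mat n n (\<lambda>(i,j).
    schur_ratio_mat n r lam s K $$ (i,j) * complex_of_real (((L - s j) / (lam i + L))^N))"

lemma expansion_term_carrier: "expansion_term k y \<in> carrier_vec n"
  unfolding expansion_term_def by (rule diag_real_mult_vec_carrier)

lemma schur_ratio_mat_mult_vec_expansion:
  assumes y: "y \<in> carrier_vec n"
  shows "schur_ratio_mat n r lam s K *\<^sub>v y
    = vec n (\<lambda>i. \<Sum>k<N. expansion_term k y $ i) + expansion_remainder N *\<^sub>v y"
proof (rule eq_vecI)
  let ?T = "schur_ratio_mat n r lam s K" and ?R = "expansion_remainder N"
  let ?a = "\<lambda>k i. complex_of_real (1 / (lam i + L)^Suc k)"
  let ?b = "\<lambda>k j. complex_of_real (if j < r then s j * (L - s j)^k else 0)"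
  have T: "?T \<in> carrier_mat n n" and R: "?R \<in> carrier_mat n n"
    unfolding schur_ratio_mat_def expansion_remainder_def by auto
  fix i assume "i < dim_vec (vec n (\<lambda>i. \<Sum>k<N. expansion_term k y $ i) + ?R *\<^sub>v y)"
  then have i: "i < n" using R by simp
  have term_index: "expansion_term k y $ i = (\<Sum>j<n. ?a k i * K $$ (i,j) * ?b k j * y$j)" for k
    using K y i unfolding expansion_term_def
    by (simp add: index_diag_real_mult_vec index_mult_mat_vec_sum[OF K] sum_distrib_left mult_ac
        del: index_mult_mat_vec)
  have "(?T *\<^sub>v y) $ i = (\<Sum>j<n. ?T $$ (i,j) * y$j)"
    by (rule index_mult_mat_vec_sum[OF T y i])
  also have "\<dots> = (\<Sum>j<n. ((\<Sum>k<N. ?a k i * K $$ (i,j) * ?b k j) + ?R $$ (i,j)) * y$j)"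
  proof (rule sum.cong)
    fix j assume "j \<in> {..<n}"
    then have j: "j < n" by simp
    have R_ij: "?R $$ (i,j) = ?T $$ (i,j) * complex_of_real (((L - s j) / (lam i + L))^N)"
      unfolding expansion_remainder_def using i j by (simp only: index_mat case_prod_conv)
    show "?T $$ (i,j) * y$j = ((\<Sum>k<N. ?a k i * K $$ (i,j) * ?b k j) + ?R $$ (i,j)) * y$j"
      unfolding R_ij
      by (rule arg_cong[where f = "\<lambda>t. t * y$j"], rule index_schur_ratio_mat_expansion[OF i j])
  qed simp
  also have "\<dots> = (vec n (\<lambda>i. \<Sum>k<N. expansion_term k y $ i) + ?R *\<^sub>v y) $ i"
    using i R y
    by (simp add: term_index sum_distrib_right distrib_right sum.distrib sum.swap[of _ "{..<N}"]
        index_mult_mat_vec_sum[OF R y i] del: index_mult_mat_vec)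
  finally show "(?T *\<^sub>v y) $ i = (vec n (\<lambda>i. \<Sum>k<N. expansion_term k y $ i) + ?R *\<^sub>v y) $ i" .
qed (simp add: schur_ratio_mat_def expansion_remainder_def)

lemma vnorm_expansion_term_le:
  assumes y: "y \<in> carrier_vec n"
  shows "vnorm (expansion_term k y) \<le> \<kappa> * ((L - m) / L)^k * vnorm y"
proof -
  have L: "0 < L" using m by linarith
  have "vnorm (expansion_term k y) \<le> 1 / L^Suc k * \<kappa> * (L * (L - m)^k) * vnorm y"
    unfolding expansion_term_def
  proof (rule vnorm_diag_real_mult_diag_real_le[OF K y K_bound \<kappa>])
    show "\<bar>1 / (lam i + L)^Suc k\<bar> \<le> 1 / L^Suc k" if "i < n" for i
    proof -
      have "0 \<le> 1 / (lam i + L)^Suc k" using lam[OF that] L by simp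
      moreover have "1 / (lam i + L)^Suc k \<le> 1 / L^Suc k"
        using lam[OF that] L by (intro frac_le power_mono) auto
      ultimately show ?thesis by (simp only: abs_of_nonneg)
    qed
    show "\<bar>if j < r then s j * (L - s j)^k else 0\<bar> \<le> L * (L - m)^k" if "j < n" for j
      using s[OF that] m by (auto simp: abs_mult intro!: mult_mono power_mono)
  qed (use m in auto)
  also have "\<dots> = \<kappa> * ((L - m) / L)^k * vnorm y"
    using L by (simp add: field_simps power_divide)
  finally show ?thesis .
qed

lemma cmod_index_expansion_remainder_le:
  assumes i: "i < n" and j: "j < n"
  shows "cmod (expansion_remainder N $$ (i,j)) \<le> \<kappa> * ((L - m) / L)^N"
proof (cases "j < r")
  case True
  have sj: "m \<le> s j" "s j \<le> L" and li: "0 \<le> lam i"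
    using s[OF j True] lam[OF i] by auto
  have ratio: "0 \<le> s j / (lam i + s j)" "s j / (lam i + s j) \<le> 1"
    using sj li m by auto
  have \<rho>: "0 \<le> (L - s j) / (lam i + L)" "(L - s j) / (lam i + L) \<le> (L - m) / L"
    using sj li m by (auto simp: frac_le)
  have "cmod (expansion_remainder N $$ (i,j))
      = cmod (K $$ (i,j)) * (s j / (lam i + s j)) * ((L - s j) / (lam i + L))^N"
    unfolding expansion_remainder_def index_mat[OF i j] case_prod_conv
      index_schur_ratio_mat[OF i j] if_P[OF True] norm_mult norm_of_real
    using ratio \<rho> by (simp only: abs_of_nonneg zero_le_power)
  also have "\<dots> \<le> \<kappa> * 1 * ((L - m) / L)^N"
    using cmod_index_le_of_vnorm_mult_mat_vec_le[OF K i j K_bound] ratio \<rho> \<kappa>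
    by (intro mult_mono power_mono) auto
  finally show ?thesis by simp
qed (use i j \<kappa> m in \<open>simp add: expansion_remainder_def index_schur_ratio_mat\<close>)

lemma vnorm_schur_ratio_mat_le_add_power:
  assumes y: "y \<in> carrier_vec n"
  shows "vnorm (schur_ratio_mat n r lam s K *\<^sub>v y)
    \<le> \<kappa> * (L / m) * vnorm y + real n * real n * (\<kappa> * ((L - m) / L)^N) * vnorm y"
proof -
  define q where "q = (L - m) / L"
  have q: "0 \<le> q" "q < 1" unfolding q_def using m by auto
  have R: "expansion_remainder N \<in> carrier_mat n n" unfolding expansion_remainder_def by simp
  have "vnorm (schur_ratio_mat n r lam s K *\<^sub>v y)
      \<le> vnorm (vec n (\<lambda>i. \<Sum>k<N. expansion_term k y $ i)) + vnorm (expansion_remainder N *\<^sub>v y)"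
    unfolding schur_ratio_mat_mult_vec_expansion[OF y, of N] using R y by (simp add: vnorm_add_le)
  also have "vnorm (vec n (\<lambda>i. \<Sum>k<N. expansion_term k y $ i)) \<le> (\<Sum>k<N. vnorm (expansion_term k y))"
    by (rule vnorm_sum_le[OF _ expansion_term_carrier]) auto
  also have "\<dots> \<le> (\<Sum>k<N. \<kappa> * vnorm y * q^k)"
    using vnorm_expansion_term_le[OF y] unfolding q_def by (intro sum_mono) (simp add: mult_ac)
  also have "\<dots> \<le> \<kappa> * (L / m) * vnorm y"
  proof -
    have "(\<Sum>k<N. q^k) \<le> 1 / (1 - q)"
      using q by (simp add: sum_gp_strict divide_right_mono)
    also have "1 / (1 - q) = L / m"
      unfolding q_def using m by (simp add: field_simps)
    finally have "\<kappa> * vnorm y * (\<Sum>k<N. q^k) \<le> \<kappa> * vnorm y * (L / m)"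
      using \<kappa> vnorm_nonneg[of y] by (intro mult_left_mono) auto
    then show ?thesis by (simp add: sum_distrib_left mult_ac)
  qed
  also have "vnorm (expansion_remainder N *\<^sub>v y)
      \<le> (\<Sum>i<n. \<Sum>j<n. cmod (expansion_remainder N $$ (i,j))) * vnorm y"
    by (rule vnorm_mult_mat_vec_le_sum_cmod[OF R y])
  also have "\<dots> \<le> (\<Sum>i<n. \<Sum>j<n. \<kappa> * q^N) * vnorm y"
    using cmod_index_expansion_remainder_le unfolding q_def
    by (intro mult_right_mono sum_mono vnorm_nonneg) simp
  finally show ?thesis unfolding q_def by simp
qed

lemma vnorm_schur_ratio_mat_le:
  assumes y: "y \<in> carrier_vec n"
  shows "vnorm (schur_ratio_mat n r lam s K *\<^sub>v y) \<le> \<kappa> * (L / m) * vnorm y"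
proof (rule le_of_le_add_power)
  show "vnorm (schur_ratio_mat n r lam s K *\<^sub>v y)
      \<le> \<kappa> * (L / m) * vnorm y + real n * real n * \<kappa> * vnorm y * ((L - m) / L)^N" for N
    using vnorm_schur_ratio_mat_le_add_power[OF y, of N] by (simp add: mult_ac)
qed (use m in auto)

end

section \<open>Perturbation of a positive semidefinite matrix\<close>

lemma adj_mult_eig_decomp:
  assumes U: "unitary_mat n U" and A: "A = U * diag_real n lam * adj U"
  shows "adj U * A = diag_real n lam * adj U"
proof -
  have Uc: "U \<in> carrier_mat n n" using U by (rule unitary_mat_carrier_mat)
  have "adj U * A = (adj U * U) * (diag_real n lam * adj U)"
    unfolding A using Uc adj_carrier_mat[OF Uc] by (simp add: assoc_mult_mat[of _ n n _ n _ n])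
  then show ?thesis using U Uc unfolding unitary_mat_def by simp
qed

lemma svd_mult_right:
  assumes X: "unitary_mat n X" and Y: "Y \<in> carrier_mat n n"
  shows "Y * diag_real n s * adj X * X = Y * diag_real n s"
proof -
  have Xc: "X \<in> carrier_mat n n" using X by (rule unitary_mat_carrier_mat)
  have "Y * diag_real n s * adj X * X = Y * diag_real n s * (adj X * X)"
    using Xc Y by (intro assoc_mult_mat[of _ n n _ n _ n]) auto
  then show ?thesis using X Y unfolding unitary_mat_def by simp
qed

lemma eig_svd_index_identity:
  assumes U: "unitary_mat n U" and X: "unitary_mat n X"
    and Y: "Y \<in> carrier_mat n n" and E: "E \<in> carrier_mat n n"
    and A_eig: "A = U * diag_real n lam * adj U" and A_svd: "A + E = Y * diag_real n s * adj X"
    and i: "i < n" and j: "j < n"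
  shows "complex_of_real (lam i) * (adj U * X) $$ (i,j) + (adj U * E * X) $$ (i,j)
    = (adj U * Y) $$ (i,j) * complex_of_real (s j)"
proof -
  have Uc: "U \<in> carrier_mat n n" and Xc: "X \<in> carrier_mat n n"
    using U X by (auto simp: unitary_mat_carrier_mat)
  have A: "A \<in> carrier_mat n n" unfolding A_eig using Uc by simp
  note adjU = adj_carrier_mat[OF Uc]
  have "adj U * (A + E) * X = adj U * A * X + adj U * E * X"
    using adjU A E Xc by (simp add: mult_add_distrib_mat[of _ n n] add_mult_distrib_mat[of _ n n])
  also have "adj U * A * X = diag_real n lam * (adj U * X)"
    using adj_mult_eig_decomp[OF U A_eig] adjU Xc by (simp add: assoc_mult_mat[of _ n n _ n _ n])
  finally have "diag_real n lam * (adj U * X) + adj U * E * X = adj U * Y * diag_real n s"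
    unfolding A_svd using svd_mult_right[OF X Y] adjU Y Xc
    by (simp add: assoc_mult_mat[of _ n n _ n _ n])
  moreover have "(diag_real n lam * (adj U * X) + adj U * E * X) $$ (i,j)
      = complex_of_real (lam i) * (adj U * X) $$ (i,j) + (adj U * E * X) $$ (i,j)"
  proof -
    have P: "adj U * X \<in> carrier_mat n n" and Q: "adj U * E * X \<in> carrier_mat n n"
      using adjU E Xc by simp_all
    then show ?thesis
      using i j by (subst index_add_mat(1)) (auto simp: index_diag_real_mult[OF P i j])
  qed
  moreover have "(adj U * Y * diag_real n s) $$ (i,j) = (adj U * Y) $$ (i,j) * complex_of_real (s j)"
    using adjU Y i j by (intro index_mult_diag_real) auto
  ultimately show ?thesis by simp
qed

lemma trunc_r_carrier_mat [simp]: "trunc_r n r V s \<in> carrier_mat n n"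
  unfolding trunc_r_def first_cols_def by (auto intro!: mult_carrier_mat)

lemma trunc_r_eq_mult_diag_real_adj:
  assumes V: "V \<in> carrier_mat n n" and r: "r \<le> n"
  shows "trunc_r n r V s = V * diag_real n (\<lambda>j. if j < r then s j else 0) * adj V"
proof (rule eq_matI)
  fix i j assume "i < dim_row (V * diag_real n (\<lambda>j. if j < r then s j else 0) * adj V)"
    "j < dim_col (V * diag_real n (\<lambda>j. if j < r then s j else 0) * adj V)"
  then have i: "i < n" and j: "j < n" using V by auto
  have F: "first_cols n r V \<in> carrier_mat n r" unfolding first_cols_def by simp
  have "trunc_r n r V s $$ (i,j) = (\<Sum>l<r. V$$(i,l) * complex_of_real (s l) * cnj (V$$(j,l)))"
    unfolding trunc_r_def index_mult_diag_real_adj[OF F F i j]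
    using i j by (intro sum.cong) (auto simp: first_cols_def)
  also have "\<dots> = (\<Sum>l<n. V$$(i,l) * complex_of_real (if l < r then s l else 0) * cnj (V$$(j,l)))"
    using r by (intro sum.mono_neutral_cong_left) auto
  also have "\<dots> = (V * diag_real n (\<lambda>j. if j < r then s j else 0) * adj V) $$ (i,j)"
    by (rule index_mult_diag_real_adj[OF V V i j, symmetric])
  finally show "trunc_r n r V s $$ (i,j) = (V * diag_real n (\<lambda>j. if j < r then s j else 0) * adj V) $$ (i,j)" .
qed (use V in \<open>auto simp: trunc_r_def first_cols_def\<close>)

lemma psd_eig_decomp_nonneg:
  assumes psd: "psd_mat n A" and U: "unitary_mat n U" and A: "A = U * diag_real n lam * adj U"
    and i: "i < n"
  shows "0 \<le> lam i"
proof -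
  have Uc: "U \<in> carrier_mat n n" using U by (rule unitary_mat_carrier_mat)
  define e :: "complex vec" where "e = unit_vec n i"
  define v where "v = U *\<^sub>v e"
  have e: "e \<in> carrier_vec n" and v: "v \<in> carrier_vec n"
    unfolding v_def e_def using Uc by auto
  have "diag_real n lam *\<^sub>v e = complex_of_real (lam i) \<cdot>\<^sub>v e"
    using e i by (intro eq_vecI) (auto simp: index_diag_real_mult_vec e_def simp del: index_mult_mat_vec)
  then have "A *\<^sub>v v = complex_of_real (lam i) \<cdot>\<^sub>v v"
    unfolding A v_def using U Uc e
    by (simp add: assoc_mult_mat3_vec[of _ n n _ n _ n] unitary_mat_adj_mult_vec_cancel mult_mat_vec)
  then have "(\<Sum>k<n. cnj (v $ k) * (A *\<^sub>v v) $ k) = complex_of_real (lam i) * cinner v v"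
    unfolding cinner_def using v by (simp add: sum_distrib_left mult.left_commute)
  also have "cinner v v = 1"
    unfolding cinner_self v_def using unitary_mat_vnorm[OF U e] i by (simp add: vnorm_unit_vec e_def)
  finally show ?thesis
    using psd v unfolding psd_mat_def by (metis Re_complex_of_real mult.right_neutral)
qed

lemma trunc_error_arith:
  fixes h d l\<^sub>0 l\<^sub>r s\<^sub>r s\<^sub>0 s\<^sub>m :: real
  assumes h: "0 \<le> h" "h \<le> d / 2" and d: "0 < d" "d \<le> l\<^sub>0" and l\<^sub>r: "0 \<le> l\<^sub>r"
    and s: "s\<^sub>r \<le> l\<^sub>r + h" "0 \<le> s\<^sub>0" "s\<^sub>0 \<le> l\<^sub>0 + h" "d / 2 \<le> s\<^sub>m"
  shows "s\<^sub>r + 2 * h * (s\<^sub>0 / s\<^sub>m) + h \<le> 8 * (l\<^sub>r + l\<^sub>0 / d * h)"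
proof -
  define X where "X = l\<^sub>0 / d * h"
  have "2 * h * (s\<^sub>0 / s\<^sub>m) \<le> 2 * h * ((l\<^sub>0 + h) / (d / 2))"
    using h d s by (intro mult_left_mono frac_le) auto
  also have "\<dots> = 4 * X + 4 * (h / d) * h"
    unfolding X_def using d by (simp add: field_simps)
  also have "4 * (h / d) * h \<le> 2 * h"
    using h d by (intro mult_right_mono) (auto simp: field_simps)
  finally have "s\<^sub>r + 2 * h * (s\<^sub>0 / s\<^sub>m) + h \<le> l\<^sub>r + 4 * h + 4 * X"
    using s by linarith
  moreover have "h \<le> X"
    unfolding X_def using h d mult_right_mono[of 1 "l\<^sub>0 / d" h] by simp
  ultimately show ?thesis
    unfolding X_def[symmetric] distrib_left using l\<^sub>r by linarith
qed

locale psd_perturbation =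
  fixes n :: nat and Qs H U V W :: "complex mat" and lam s :: "nat \<Rightarrow> real"
  assumes psd: "psd_mat n Qs" and H: "H \<in> carrier_mat n n"
    and eig: "sorted_eig_decomp n Qs U lam" and svd: "svd n (Qs + H) V s W"
begin

lemma unitary: "unitary_mat n U" "unitary_mat n V" "unitary_mat n W"
  using eig svd unfolding sorted_eig_decomp_def svd_def by auto

lemma carrier: "U \<in> carrier_mat n n" "V \<in> carrier_mat n n" "W \<in> carrier_mat n n"
  using unitary by (auto simp: unitary_mat_carrier_mat)

lemma Qs_eq: "Qs = U * diag_real n lam * adj U"
  using eig unfolding sorted_eig_decomp_def by simp

lemma Qs_carrier: "Qs \<in> carrier_mat n n"
  unfolding Qs_eq using carrier by simp

lemma Q_eq: "Qs + H = V * diag_real n s * adj W"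
  using svd unfolding svd_def by simp

lemma adj_Q_eq: "Qs + adj H = W * diag_real n s * adj V"
proof -
  have "Qs + adj H = adj (Qs + H)"
    using psd Qs_carrier H unfolding psd_mat_def hermitian_mat_def by (simp add: adj_add)
  then show ?thesis
    unfolding Q_eq using carrier by (simp add: adj_mult_diag_real_adj)
qed

lemma Qs_eq_svd_minus_adj: "Qs = W * diag_real n s * adj V - adj H"
  using adj_Q_eq Qs_carrier H by (intro eq_matI) (auto simp flip: adj_Q_eq)

lemma lam_antimono: "i \<le> j \<Longrightarrow> j < n \<Longrightarrow> lam j \<le> lam i"
  using eig unfolding sorted_eig_decomp_def by simp

lemma s_antimono: "i \<le> j \<Longrightarrow> j < n \<Longrightarrow> s j \<le> s i"
  using svd unfolding svd_def by simp

lemma s_nonneg: "i < n \<Longrightarrow> 0 \<le> s i"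
  using svd unfolding svd_def by simp

lemma lam_nonneg: "i < n \<Longrightarrow> 0 \<le> lam i"
  using psd unitary(1) Qs_eq by (rule psd_eig_decomp_nonneg)

lemma s_le_lam_add_spec_norm: "k < n \<Longrightarrow> s k \<le> lam k + spec_norm H"
proof -
  assume k: "k < n"
  have "(Qs + H) - Qs = H"
    using Qs_carrier H by (intro eq_matI) auto
  then show ?thesis
    using weyl_singular_value_le[OF unitary(3,1,2,1) k, of s lam] k
    by (auto simp: Q_eq[symmetric] Qs_eq[symmetric] s_antimono s_nonneg lam_antimono lam_nonneg)
qed

lemma lam_le_s_add_spec_norm: "k < n \<Longrightarrow> lam k \<le> s k + spec_norm H"
proof -
  assume k: "k < n"
  have "Qs - (Qs + H) = - H"
    using Qs_carrier H by (intro eq_matI) auto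
  then show ?thesis
    using weyl_singular_value_le[OF unitary(1,3,1,2) k, of lam s] k
    by (auto simp: Q_eq[symmetric] Qs_eq[symmetric] spec_norm_uminus s_antimono s_nonneg lam_antimono
        lam_nonneg)
qed

definition D :: "complex mat" where "D = adj U * W - adj U * V"

definition K :: "complex mat" where "K = adj U * adj H * V - adj U * H * W"

lemma D_carrier: "D \<in> carrier_mat n n" and K_carrier: "K \<in> carrier_mat n n"
  unfolding D_def K_def using carrier H by auto

lemma sylvester_equation_index:
  assumes i: "i < n" and j: "j < n"
  shows "complex_of_real (lam i + s j) * D $$ (i,j) = K $$ (i,j)"
proof -
  let ?l = "complex_of_real (lam i)" and ?s = "complex_of_real (s j)"
  have "?l * (adj U * W) $$ (i,j) + (adj U * H * W) $$ (i,j) = (adj U * V) $$ (i,j) * ?s"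
    using unitary carrier H Qs_eq Q_eq i j by (intro eig_svd_index_identity) auto
  then have HW: "(adj U * H * W) $$ (i,j) = (adj U * V) $$ (i,j) * ?s - ?l * (adj U * W) $$ (i,j)"
    by (metis add_diff_cancel_left')
  have "?l * (adj U * V) $$ (i,j) + (adj U * adj H * V) $$ (i,j) = (adj U * W) $$ (i,j) * ?s"
    using unitary carrier H Qs_eq adj_Q_eq i j by (intro eig_svd_index_identity) auto
  then have HV: "(adj U * adj H * V) $$ (i,j) = (adj U * W) $$ (i,j) * ?s - ?l * (adj U * V) $$ (i,j)"
    by (metis add_diff_cancel_left')
  have D_ij: "D $$ (i,j) = (adj U * W) $$ (i,j) - (adj U * V) $$ (i,j)"
    and K_ij: "K $$ (i,j) = (adj U * adj H * V) $$ (i,j) - (adj U * H * W) $$ (i,j)"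
    unfolding D_def K_def using carrier H i j by auto
  show ?thesis unfolding D_ij K_ij HW HV by (simp add: algebra_simps)
qed

lemma vnorm_K_mult_vec_le:
  assumes z: "z \<in> carrier_vec n"
  shows "vnorm (K *\<^sub>v z) \<le> 2 * spec_norm H * vnorm z"
proof -
  have Vz: "V *\<^sub>v z \<in> carrier_vec n" and Wz: "W *\<^sub>v z \<in> carrier_vec n"
    using carrier z by auto
  have "K *\<^sub>v z = adj U *\<^sub>v (adj H *\<^sub>v (V *\<^sub>v z)) - adj U *\<^sub>v (H *\<^sub>v (W *\<^sub>v z))"
    unfolding K_def using carrier H z
    by (simp add: minus_mult_distrib_mat_vec[of _ n n] assoc_mult_mat3_vec[of _ n n _ n _ n])
  then have "vnorm (K *\<^sub>v z) \<le> vnorm (adj H *\<^sub>v (V *\<^sub>v z)) + vnorm (H *\<^sub>v (W *\<^sub>v z))"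
    using unitary_mat_adj[OF unitary(1)] carrier H Vz Wz vnorm_diff_le
    by (metis adj_carrier_mat carrier_matD(1) dim_mult_mat_vec mult_mat_vec_carrier unitary_mat_vnorm)
  also have "\<dots> \<le> spec_norm H * vnorm (V *\<^sub>v z) + spec_norm H * vnorm (W *\<^sub>v z)"
    using H Vz Wz
    by (intro add_mono vnorm_adj_mult_mat_vec_le_spec_norm vnorm_mult_mat_vec_le_spec_norm) auto
  also have "\<dots> = 2 * spec_norm H * vnorm z"
    using unitary z by (simp add: unitary_mat_vnorm)
  finally show ?thesis .
qed

lemma D_mult_diag_real_trunc:
  "D * diag_real n (\<lambda>j. if j < r then s j else 0) = schur_ratio_mat n r lam s K"
proof (rule eq_matI)
  fix i j assume "i < dim_row (schur_ratio_mat n r lam s K)" "j < dim_col (schur_ratio_mat n r lam s K)"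
  then have i: "i < n" and j: "j < n" unfolding schur_ratio_mat_def by auto
  have "(D * diag_real n (\<lambda>j. if j < r then s j else 0)) $$ (i,j)
      = D $$ (i,j) * complex_of_real (if j < r then s j else 0)"
    by (rule index_mult_diag_real[OF D_carrier i j])
  also have "\<dots> = schur_ratio_mat n r lam s K $$ (i,j)"
  proof (cases "j < r \<and> lam i + s j \<noteq> 0")
    case True
    then have "complex_of_real (lam i + s j) \<noteq> 0" by (simp only: of_real_eq_0_iff) simp
    then have "D $$ (i,j) = K $$ (i,j) / complex_of_real (lam i + s j)"
      by (metis sylvester_equation_index[OF i j] nonzero_mult_div_cancel_left)
    then show ?thesis
      using True i j by (simp add: index_schur_ratio_mat)
  next
    case False
    then have "j < r \<Longrightarrow> s j = 0"
      using lam_nonneg[OF i] s_nonneg[OF j] by linarith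
    then show ?thesis
      using False i j by (auto simp: index_schur_ratio_mat)
  qed
  finally show "(D * diag_real n (\<lambda>j. if j < r then s j else 0)) $$ (i,j) = schur_ratio_mat n r lam s K $$ (i,j)" .
qed (use D_carrier in \<open>auto simp: schur_ratio_mat_def\<close>)

lemma trunc_residual_mult_vec_eq:
  assumes r: "r \<le> n" and x: "x \<in> carrier_vec n"
  shows "(Qs - trunc_r n r V s) *\<^sub>v x
    = W *\<^sub>v (diag_real n (\<lambda>j. if j < r then 0 else s j) *\<^sub>v (adj V *\<^sub>v x))
      + U *\<^sub>v (schur_ratio_mat n r lam s K *\<^sub>v (adj V *\<^sub>v x)) - adj H *\<^sub>v x"
proof -
  define z where "z = adj V *\<^sub>v x"
  define S\<^sub>r where "S\<^sub>r = diag_real n (\<lambda>j. if j < r then s j else 0)"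
  define S\<^sub>p where "S\<^sub>p = diag_real n (\<lambda>j. if j < r then 0 else s j)"
  have z: "z \<in> carrier_vec n" unfolding z_def using carrier x by simp
  have Sr: "S\<^sub>r \<in> carrier_mat n n" and Sp: "S\<^sub>p \<in> carrier_mat n n"
    unfolding S\<^sub>r_def S\<^sub>p_def by auto
  have split: "diag_real n s *\<^sub>v z = S\<^sub>r *\<^sub>v z + S\<^sub>p *\<^sub>v z"
    unfolding S\<^sub>r_def S\<^sub>p_def using z
    by (intro eq_vecI) (auto simp: index_diag_real_mult_vec simp del: index_mult_mat_vec)
  have Qs_x: "Qs *\<^sub>v x = W *\<^sub>v (S\<^sub>r *\<^sub>v z) + W *\<^sub>v (S\<^sub>p *\<^sub>v z) - adj H *\<^sub>v x"
    using carrier H x z Sr Sp unfolding z_def Qs_eq_svd_minus_adj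
    by (simp add: minus_mult_distrib_mat_vec[of _ n n] assoc_mult_mat3_vec[of _ n n _ n _ n]
        split[unfolded z_def] mult_add_distrib_mat_vec[of _ n n])
  have trunc_x: "trunc_r n r V s *\<^sub>v x = V *\<^sub>v (S\<^sub>r *\<^sub>v z)"
    unfolding trunc_r_eq_mult_diag_real_adj[OF carrier(2) r] S\<^sub>r_def z_def
    using carrier x by (simp add: assoc_mult_mat3_vec[of _ n n _ n _ n])
  have D_z: "U *\<^sub>v (schur_ratio_mat n r lam s K *\<^sub>v z) = W *\<^sub>v (S\<^sub>r *\<^sub>v z) - V *\<^sub>v (S\<^sub>r *\<^sub>v z)"
  proof -
    have "schur_ratio_mat n r lam s K *\<^sub>v z = D *\<^sub>v (S\<^sub>r *\<^sub>v z)"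
      unfolding D_mult_diag_real_trunc[symmetric, of r] S\<^sub>r_def[symmetric]
      using D_carrier Sr z by (rule assoc_mult_mat_vec)
    also have "\<dots> = adj U *\<^sub>v (W *\<^sub>v (S\<^sub>r *\<^sub>v z) - V *\<^sub>v (S\<^sub>r *\<^sub>v z))"
      unfolding D_def using carrier z Sr
      by (simp add: assoc_mult_mat_vec[of _ n n _ n] minus_mult_distrib_mat_vec[of _ n n]
          mult_minus_distrib_mat_vec[of _ n n])
    finally have "schur_ratio_mat n r lam s K *\<^sub>v z = adj U *\<^sub>v (W *\<^sub>v (S\<^sub>r *\<^sub>v z) - V *\<^sub>v (S\<^sub>r *\<^sub>v z))" .
    then show ?thesis
      using unitary_mat_adj_mult_vec_cancel[OF unitary_mat_adj[OF unitary(1)]] carrier z Sr by simp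
  qed
  have "(Qs - trunc_r n r V s) *\<^sub>v x = Qs *\<^sub>v x - trunc_r n r V s *\<^sub>v x"
    using Qs_carrier x by (intro minus_mult_distrib_mat_vec) auto
  also have "\<dots> = W *\<^sub>v (S\<^sub>p *\<^sub>v z) + U *\<^sub>v (schur_ratio_mat n r lam s K *\<^sub>v z) - adj H *\<^sub>v x"
    unfolding Qs_x trunc_x D_z using carrier H x z Sr Sp by (intro eq_vecI) auto
  finally show ?thesis unfolding z_def S\<^sub>p_def .
qed

lemma spec_norm_trunc_residual_le_sum:
  assumes r: "r \<le> n" and \<beta>: "0 \<le> \<beta>"
    and T: "\<And>z. z \<in> carrier_vec n \<Longrightarrow> vnorm (schur_ratio_mat n r lam s K *\<^sub>v z) \<le> \<beta> * vnorm z"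
  shows "spec_norm (Qs - trunc_r n r V s) \<le> (if r < n then s r else 0) + \<beta> + spec_norm H"
proof (rule spec_norm_le)
  let ?t = "if r < n then s r else 0"
  show "0 \<le> ?t + \<beta> + spec_norm H"
    using s_nonneg \<beta> spec_norm_nonneg[of H] by simp
  fix x :: "complex vec" assume "x \<in> carrier_vec (dim_col (Qs - trunc_r n r V s))"
  then have x: "x \<in> carrier_vec n"
    using carrier_matD(2)[OF trunc_r_carrier_mat] by simp
  define z where "z = adj V *\<^sub>v x"
  have z: "z \<in> carrier_vec n" and z_norm: "vnorm z = vnorm x"
    unfolding z_def using carrier x unitary_mat_vnorm[OF unitary_mat_adj[OF unitary(2)] x] by auto
  have "vnorm ((Qs - trunc_r n r V s) *\<^sub>v x)
      \<le> vnorm (W *\<^sub>v (diag_real n (\<lambda>j. if j < r then 0 else s j) *\<^sub>v z))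
        + vnorm (U *\<^sub>v (schur_ratio_mat n r lam s K *\<^sub>v z)) + vnorm (adj H *\<^sub>v x)"
    unfolding trunc_residual_mult_vec_eq[OF r x, folded z_def]
    using carrier H x z
    by (intro order_trans[OF vnorm_diff_le] add_mono order_trans[OF vnorm_add_le])
      (auto simp: schur_ratio_mat_def)
  also have "\<dots> \<le> ?t * vnorm x + \<beta> * vnorm x + spec_norm H * vnorm x"
  proof (intro add_mono)
    show "vnorm (W *\<^sub>v (diag_real n (\<lambda>j. if j < r then 0 else s j) *\<^sub>v z)) \<le> ?t * vnorm x"
      unfolding unitary_mat_vnorm[OF unitary(3) diag_real_mult_vec_carrier] z_norm[symmetric]
      using s_nonneg s_antimono z by (intro vnorm_diag_real_mult_vec_le) auto
    show "vnorm (U *\<^sub>v (schur_ratio_mat n r lam s K *\<^sub>v z)) \<le> \<beta> * vnorm x"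
      using unitary_mat_vnorm[OF unitary(1)] T[OF z] z z_norm by (simp add: schur_ratio_mat_def)
    show "vnorm (adj H *\<^sub>v x) \<le> spec_norm H * vnorm x"
      using H x by (rule vnorm_adj_mult_mat_vec_le_spec_norm)
  qed
  finally show "vnorm ((Qs - trunc_r n r V s) *\<^sub>v x) \<le> (?t + \<beta> + spec_norm H) * vnorm x"
    by (simp add: distrib_right)
qed

lemma vnorm_schur_ratio_K_le:
  assumes r: "1 \<le> r" "r \<le> n" and pos: "0 < s (r - 1) \<or> spec_norm H = 0"
    and z: "z \<in> carrier_vec n"
  shows "vnorm (schur_ratio_mat n r lam s K *\<^sub>v z) \<le> 2 * spec_norm H * (s 0 / s (r - 1)) * vnorm z"
proof (cases "0 < s (r - 1)")
  case True
  interpret schur_ratio n r lam s K "2 * spec_norm H" "s (r - 1)" "s 0"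
  proof
    show "\<And>j. j < n \<Longrightarrow> j < r \<Longrightarrow> s (r - 1) \<le> s j \<and> s j \<le> s 0"
      using r by (auto intro: s_antimono)
  qed (use True r K_carrier vnorm_K_mult_vec_le spec_norm_nonneg lam_nonneg s_antimono in auto)
  show ?thesis
    using vnorm_schur_ratio_mat_le[OF z] by (simp add: ac_simps)
next
  case False
  then have "spec_norm H = 0" using pos by simp
  then have "K $$ (i,j) = 0" if "i < n" "j < n" for i j
    using cmod_index_le_of_vnorm_mult_mat_vec_le[OF K_carrier that, of 0] vnorm_K_mult_vec_le by simp
  then have "schur_ratio_mat n r lam s K *\<^sub>v z = 0\<^sub>v n"
    using z by (intro eq_vecI) (auto simp: index_mult_mat_vec_sum[of _ n n] index_schur_ratio_mat
        schur_ratio_mat_def simp del: index_mult_mat_vec intro!: sum.neutral)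
  then show ?thesis by (simp add: \<open>spec_norm H = 0\<close>)
qed

theorem spec_norm_trunc_residual_le:
  assumes r: "1 \<le> r" "r \<le> n" and d: "0 \<le> d" "d \<le> lam (r - 1)" and h: "spec_norm H \<le> d / 2"
  shows "spec_norm (Qs - trunc_r n r V s) \<le> 8 * ((if r < n then lam r else 0) + lam 0 / d * spec_norm H)"
proof -
  let ?h = "spec_norm H" and ?l\<^sub>r = "if r < n then lam r else 0" and ?s\<^sub>r = "if r < n then s r else 0"
  have h0: "0 \<le> ?h" by (rule spec_norm_nonneg)
  have r1: "r - 1 < n" using r by simp
  have s_tail: "?s\<^sub>r \<le> ?l\<^sub>r + ?h" and l_tail: "0 \<le> ?l\<^sub>r"
    using s_le_lam_add_spec_norm lam_nonneg h0 by auto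
  show ?thesis
  proof (cases "d = 0")
    case True
    \<comment> \<open>then \<open>H = 0\<close>, and the junk value \<open>lam 0 / 0 = 0\<close> is harmless\<close>
    then have "?h = 0" using h h0 by simp
    then have "spec_norm (Qs - trunc_r n r V s) \<le> ?s\<^sub>r + 0 + ?h"
      using vnorm_schur_ratio_K_le[OF r] by (intro spec_norm_trunc_residual_le_sum) (use r in auto)
    then show ?thesis using s_tail l_tail \<open>?h = 0\<close> by simp
  next
    case False
    have s_gap: "d / 2 \<le> s (r - 1)"
      using lam_le_s_add_spec_norm[OF r1] d h by linarith
    then have "spec_norm (Qs - trunc_r n r V s) \<le> ?s\<^sub>r + 2 * ?h * (s 0 / s (r - 1)) + ?h"
      using False d vnorm_schur_ratio_K_le[OF r] h0 s_nonneg r1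
      by (intro spec_norm_trunc_residual_le_sum) (auto intro!: divide_nonneg_nonneg)
    also have "\<dots> \<le> 8 * (?l\<^sub>r + lam 0 / d * ?h)"
      using False d h h0 s_tail l_tail s_gap s_nonneg[of 0] s_le_lam_add_spec_norm[of 0]
        lam_antimono[OF _ r1, of 0] r1
      by (intro trunc_error_arith) auto
    finally show ?thesis .
  qed
qed

end

theorem lemma11:
  "\<exists>C>0. \<forall>(n::nat) (r::nat) Qs H U lam V s W.
     1 \<le> r \<longrightarrow> r \<le> n \<longrightarrow>
     psd_mat n Qs \<longrightarrow> H \<in> carrier_mat n n \<longrightarrow>
     sorted_eig_decomp n Qs U lam \<longrightarrow>
     svd n (Qs + H) V s W \<longrightarrow>
     (let ls = (\<lambda>j. if j \<le> n then lam (j - 1) else 0);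
          del = Min ({\<bar>ls j - ls (j+1)\<bar> | j. 1 \<le> j \<and> j \<le> r - 1} \<union> {ls r})
      in spec_norm H \<le> del / 2 \<longrightarrow>
         spec_norm (Qs - trunc_r n r V s) \<le> C * (ls (r+1) + ls 1 / del * spec_norm H))"
proof (intro exI[of _ 8] conjI allI impI)
  fix n r :: nat and Qs H U lam V s W
  assume r: "1 \<le> r" "r \<le> n" and "psd_mat n Qs" "H \<in> carrier_mat n n"
    "sorted_eig_decomp n Qs U lam" "svd n (Qs + H) V s W"
  then interpret psd_perturbation n Qs H U V W lam s
    by unfold_locales
  define ls where "ls j = (if j \<le> n then lam (j - 1) else 0)" for j
  define gaps where "gaps = {\<bar>ls j - ls (j+1)\<bar> | j. 1 \<le> j \<and> j \<le> r - 1}"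
  have ls: "ls 1 = lam 0" "ls r = lam (r - 1)" "ls (r + 1) = (if r < n then lam r else 0)"
    unfolding ls_def using r by auto
  have fin: "finite (gaps \<union> {ls r})"
    unfolding gaps_def by (simp add: setcompr_eq_image)
  have "Min (gaps \<union> {ls r}) \<in> gaps \<union> {ls r}" using fin by (intro Min_in) auto
  then have del_nonneg: "0 \<le> Min (gaps \<union> {ls r})"
    unfolding gaps_def using ls(2) lam_nonneg r by auto
  have del_le: "Min (gaps \<union> {ls r}) \<le> lam (r - 1)"
    using fin ls(2) by (metis Min_le UnI2 singletonI)
  show "let ls = (\<lambda>j. if j \<le> n then lam (j - 1) else 0);
          del = Min ({\<bar>ls j - ls (j+1)\<bar> | j. 1 \<le> j \<and> j \<le> r - 1} \<union> {ls r})
      in spec_norm H \<le> del / 2 \<longrightarrow>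
         spec_norm (Qs - trunc_r n r V s) \<le> 8 * (ls (r+1) + ls 1 / del * spec_norm H)"
    unfolding Let_def ls_def[symmetric] gaps_def[symmetric] ls(1,3)
    using spec_norm_trunc_residual_le[OF r del_nonneg del_le] by blast
qed simp

end
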